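(* Let $\mathcal{H}=(\mathcal{V},\mathcal{E})$ be a connected hypergraph with a vertex $w$ and two proper subsets $\mathcal{V}_1,\mathcal{V}_2$ of $\mathcal{V}$ such that $\mathcal{V}_1\cup\mathcal{V}_2=\mathcal{V}$, $\mathcal{V}_1\cap\mathcal{V}_2=\{w\}$, and every $e\in\mathcal{E}$ satisfies $w\in e$ or $e\subseteq\mathcal{V}_i$ for some $i\in\{1,2\}$. Let $\mathcal{I}_{(\mathcal{V}_1,\mathcal{V}_2)}(\mathcal{H})$ be the set of those $\mathcal{V}_0\in\mathcal{I}(\mathcal{H})$ with $\mathcal{V}_i\subseteq\mathcal{V}_0$ for some $i\in\{1,2\}$. Then $(\lambda-1)^2$ divides $P(\mathcal{H},\lambda)$ if and only if $\lambda^2$ divides the polynomial $\sum_{\mathcal{V}_0\in\mathcal{I}_{(\mathcal{V}_1,\mathcal{V}_2)}(\mathcal{H})}P(\mathcal{H}-\mathcal{V}_0,\lambda)$.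
   Context: A hypergraph $\mathcal{H}=(\mathcal{V},\mathcal{E})$ consists of a finite vertex set $\mathcal{V}$ and a set $\mathcal{E}$ of subsets of $\mathcal{V}$, each of size at least $1$, called edges. For a positive integer $\lambda$, a weak proper $\lambda$-colouring of $\mathcal{H}$ is a map $\phi:\mathcal{V}\to\{1,\dots,\lambda\}$ such that $|\{\phi(v):v\in e\}|>1$ for every $e\in\mathcal{E}$. $P(\mathcal{H},\lambda)$ denotes the number of weak proper $\lambda$-colourings; it is a polynomial in $\lambda$ (equal to $1$ for the hypergraph with no vertices). $\mathcal{H}$ is connected if for any two vertices $v_1,v_2$ there is a sequence of edges $e_0,\dots,e_k$ with $v_1\in e_0$, $v_2\in e_k$, $e_i\cap e_{i+1}\ne\emptyset$. For $\mathcal{V}_0\subseteq\mathcal{V}$, $\mathcal{H}[\mathcal{V}_0]$ has vertex set $\mathcal{V}_0$ and edge set $\{e\in\mathcal{E}:e\subseteq\mathcal{V}_0\}$; $\mathcal{H}-\mathcal{V}_0=\mathcal{H}[\mathcal{V}\setminus\mathcal{V}_0]$; $\mathcal{I}(\mathcal{H})$ is the set of subsets $\mathcal{V}_0\subseteq\mathcal{V}$ such that $\mathcal{H}[\mathcal{V}_0]$ has no edges. *)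

theory Defs
  imports "HOL-Library.FuncSet" "HOL-Computational_Algebra.Polynomial"
begin

definition hypergraph :: "'a set \<Rightarrow> 'a set set \<Rightarrow> bool" where
  "hypergraph V E \<longleftrightarrow> finite V \<and> (\<forall>e\<in>E. e \<subseteq> V \<and> e \<noteq> {})"

definition hg_connected :: "'a set \<Rightarrow> 'a set set \<Rightarrow> bool" where
  "hg_connected V E \<longleftrightarrow>
     (\<forall>v1\<in>V. \<forall>v2\<in>V. \<exists>es. es \<noteq> [] \<and> set es \<subseteq> E \<and> v1 \<in> hd es \<and> v2 \<in> last es \<and>
        (\<forall>i. Suc i < length es \<longrightarrow> es ! i \<inter> es ! Suc i \<noteq> {}))"

definition weak_colourings :: "'a set \<Rightarrow> 'a set set \<Rightarrow> nat \<Rightarrow> ('a \<Rightarrow> nat) set" where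
  "weak_colourings V E n = {\<phi> \<in> V \<rightarrow>\<^sub>E {1..n}. \<forall>e\<in>E. card (\<phi> ` e) > 1}"

definition chrom_poly :: "'a set \<Rightarrow> 'a set set \<Rightarrow> int poly" where
  "chrom_poly V E = (THE p. \<forall>n::nat. n \<ge> 1 \<longrightarrow> poly p (int n) = int (card (weak_colourings V E n)))"

definition induced_edges :: "'a set set \<Rightarrow> 'a set \<Rightarrow> 'a set set" where
  "induced_edges E V0 = {e \<in> E. e \<subseteq> V0}"

definition indep_sets :: "'a set \<Rightarrow> 'a set set \<Rightarrow> 'a set set" where
  "indep_sets V E = {V0. V0 \<subseteq> V \<and> induced_edges E V0 = {}}"

end

theory Submission
  imports Defs "HOL-Combinatorics.Transposition"
begin

text \<open>Colour the cut vertex \<open>w\<close> with an extra colour \<open>\<lambda> + 1\<close>: its colour class \<open>S\<close> is an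
  independent set containing \<open>w\<close>, and what remains is an arbitrary weak proper \<open>\<lambda>\<close>-colouring
  of \<open>H - S\<close>. Since all colours of \<open>w\<close> are equally frequent, this gives
  \<open>P(H, \<lambda> + 1) = (\<lambda> + 1) \<Sum>\<^sub>S P(H - S, \<lambda>)\<close>, summed over the independent sets \<open>S\<close> containing \<open>w\<close>.
  Shifting \<open>\<lambda>\<close> by one, \<open>(\<lambda> - 1)\<^sup>2\<close> divides \<open>P(H, \<lambda>)\<close> iff \<open>\<lambda>\<^sup>2\<close> divides this sum, as
  \<open>\<lambda> + 1\<close> does not vanish at 0. If \<open>S\<close> contains \<open>w\<close> but neither \<open>V1\<close> nor \<open>V2\<close>, every edge of
  \<open>H - S\<close> avoids \<open>w\<close> and hence lies in \<open>V1 - S\<close> or in \<open>V2 - S\<close>: so \<open>H - S\<close> is the disjoint union of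
  two nonempty hypergraphs, \<open>P(H - S, \<lambda>)\<close> is the product of two polynomials vanishing at 0, and
  the term is divisible by \<open>\<lambda>\<^sup>2\<close>. The surviving terms are those with \<open>V1 \<subseteq> S\<close> or \<open>V2 \<subseteq> S\<close>.\<close>

lemma poly_eqI_nat:
  fixes p q :: "'a::{idom, ring_char_0} poly"
  assumes "\<And>n. n \<ge> 1 \<Longrightarrow> poly p (of_nat n) = poly q (of_nat n)"
  shows "p = q"
proof (rule ccontr)
  assume "p \<noteq> q"
  then have "finite {x. poly (p - q) x = 0}"
    by (intro poly_roots_finite) simp
  moreover have "of_nat ` {1..} \<subseteq> {x :: 'a. poly (p - q) x = 0}"
    using assms by auto
  moreover have "infinite (of_nat ` {1..} :: 'a set)"
  proof
    assume "finite (of_nat ` {1..} :: 'a set)"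
    then have "finite {1::nat..}"
      by (rule finite_imageD) (simp add: inj_on_def)
    then show False by (simp add: infinite_Ici)
  qed
  ultimately show False
    using finite_subset by blast
qed

lemma pcompose_power_left: "pcompose (p ^ k) r = pcompose p r ^ k"
  by (induction k) (simp_all add: pcompose_mult pcompose_1)

lemma pcompose_dvd: "q dvd p \<Longrightarrow> pcompose q r dvd pcompose p r"
  by (auto simp: pcompose_mult)

lemma power_dvd_iff_pcompose_shift:
  fixes p :: "'a::comm_ring_1 poly"
  shows "[:-1, 1:] ^ k dvd p \<longleftrightarrow> [:0, 1:] ^ k dvd pcompose p [:1, 1:]"
proof
  assume "[:-1, 1:] ^ k dvd p"
  then have "pcompose ([:-1, 1:] ^ k) [:1, 1:] dvd pcompose p [:1, 1:]"
    by (rule pcompose_dvd)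
  then show "[:0, 1:] ^ k dvd pcompose p [:1, 1:]"
    by (simp add: pcompose_power_left pcompose_pCons)
next
  assume "[:0, 1:] ^ k dvd pcompose p [:1, 1:]"
  then have "pcompose ([:0, 1:] ^ k) [:-1, 1:] dvd pcompose (pcompose p [:1, 1:]) [:-1, 1:]"
    by (rule pcompose_dvd)
  moreover have "pcompose (pcompose p [:1, 1:]) [:-1, 1:] = p"
    by (simp add: pcompose_assoc[symmetric] pcompose_pCons)
  ultimately show "[:-1, 1:] ^ k dvd p"
    by (simp add: pcompose_power_left pcompose_pCons)
qed

lemma x_power_dvd_mult_iff:
  fixes p c :: "'a::idom poly"
  assumes "poly c 0 \<noteq> 0"
  shows "[:0, 1:] ^ k dvd c * p \<longleftrightarrow> [:0, 1:] ^ k dvd p"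
proof (cases "p = 0")
  case False
  with assms have "c * p \<noteq> 0" by auto
  moreover have "order 0 c = 0" using assms order_root by blast
  ultimately have "order 0 (c * p) = order 0 p" by (simp add: order_mult)
  then show ?thesis
    using order_divides[of 0 k "c * p"] order_divides[of 0 k p] \<open>c * p \<noteq> 0\<close> False by simp
qed simp

lemma finite_weak_colourings: "finite V \<Longrightarrow> finite (weak_colourings V E n)"
  unfolding weak_colourings_def by (rule finite_subset[of _ "V \<rightarrow>\<^sub>E {1..n}"]) (auto intro: finite_PiE)

lemma finite_indep_sets: "finite V \<Longrightarrow> finite (indep_sets V E)"
  unfolding indep_sets_def by (rule finite_subset[of _ "Pow V"]) auto

lemma weak_colourings_0: "V \<noteq> {} \<Longrightarrow> weak_colourings V E 0 = {}"
  unfolding weak_colourings_def by (auto simp: PiE_iff)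

lemma weak_colourings_empty_vertices: "weak_colourings {} E n = weak_colourings {} E 0"
  unfolding weak_colourings_def by simp

lemma restrict_weak_colouring:
  assumes "\<phi> \<in> weak_colourings V E m" and "U \<subseteq> V" and "\<phi> ` U \<subseteq> {1..n}"
  shows "restrict \<phi> U \<in> weak_colourings U (induced_edges E U) n"
proof -
  have "restrict \<phi> U ` e = \<phi> ` e" if "e \<subseteq> U" for e
    using that by auto
  then show ?thesis
    using assms by (auto simp: weak_colourings_def induced_edges_def restrict_PiE_iff)
qed

lemma restrict_comp_weak_colouring:
  assumes sub: "\<forall>e\<in>E. e \<subseteq> V" and \<pi>: "inj_on \<pi> {1..m}" "\<pi> ` {1..m} \<subseteq> {1..m}"
    and \<phi>: "\<phi> \<in> weak_colourings V E m"
  shows "restrict (\<pi> \<circ> \<phi>) V \<in> weak_colourings V E m"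
proof -
  have "card (restrict (\<pi> \<circ> \<phi>) V ` e) = card (\<phi> ` e)" if "e \<in> E" for e
  proof -
    have "\<phi> ` e \<subseteq> {1..m}"
      using \<phi> sub that by (auto simp: weak_colourings_def)
    then have "card (\<pi> ` \<phi> ` e) = card (\<phi> ` e)"
      by (intro card_image inj_on_subset[OF \<pi>(1)])
    moreover have "restrict (\<pi> \<circ> \<phi>) V ` e = \<pi> ` \<phi> ` e"
      using sub that by (auto simp: image_iff)
    ultimately show ?thesis by simp
  qed
  moreover have "\<pi> (\<phi> x) \<in> {1..m}" if "x \<in> V" for x
  proof -
    have "\<phi> x \<in> {1..m}" using \<phi> that by (auto simp: weak_colourings_def)
    then show ?thesis using \<pi>(2) by blast
  qed
  ultimately show ?thesis
    using \<phi> by (auto simp: weak_colourings_def restrict_PiE_iff)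
qed

lemma card_weak_colourings_fixed_colour:
  assumes sub: "\<forall>e\<in>E. e \<subseteq> V" and v: "v \<in> V" and c: "c \<in> {1..m}"
  shows "card {\<phi> \<in> weak_colourings V E m. \<phi> v = c} = card {\<phi> \<in> weak_colourings V E m. \<phi> v = m}"
proof -
  define \<tau> where "\<tau> \<phi> = restrict (transpose c m \<circ> \<phi>) V" for \<phi> :: "'a \<Rightarrow> nat"
  have m: "m \<in> {1..m}" using c by auto
  have colouring: "\<tau> \<phi> \<in> weak_colourings V E m" if "\<phi> \<in> weak_colourings V E m" for \<phi>
    unfolding \<tau>_def using c m that
    by (intro restrict_comp_weak_colouring[OF sub]) (auto simp: transpose_def)
  have involution: "\<tau> (\<tau> \<phi>) = \<phi>" if "\<phi> \<in> weak_colourings V E m" for \<phi>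
    using that by (auto simp: \<tau>_def weak_colourings_def PiE_iff extensional_def fun_eq_iff)
  have at_v: "\<tau> \<phi> v = transpose c m (\<phi> v)" for \<phi>
    using v by (simp add: \<tau>_def)
  have "bij_betw \<tau> {\<phi> \<in> weak_colourings V E m. \<phi> v = c} {\<phi> \<in> weak_colourings V E m. \<phi> v = m}"
  proof (rule bij_betw_byWitness[where f' = \<tau>])
    show "\<tau> ` {\<phi> \<in> weak_colourings V E m. \<phi> v = c} \<subseteq> {\<phi> \<in> weak_colourings V E m. \<phi> v = m}"
      using colouring by (auto simp: at_v)
    show "\<tau> ` {\<phi> \<in> weak_colourings V E m. \<phi> v = m} \<subseteq> {\<phi> \<in> weak_colourings V E m. \<phi> v = c}"
      using colouring by (auto simp: at_v)
  qed (auto simp: involution)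
  then show ?thesis by (rule bij_betw_same_card)
qed

lemma card_weak_colourings_eq_mult:
  assumes fin: "finite V" and sub: "\<forall>e\<in>E. e \<subseteq> V" and v: "v \<in> V"
  shows "card (weak_colourings V E m) = m * card {\<phi> \<in> weak_colourings V E m. \<phi> v = m}"
proof -
  have "weak_colourings V E m = (\<Union>c\<in>{1..m}. {\<phi> \<in> weak_colourings V E m. \<phi> v = c})"
    using v by (auto simp: weak_colourings_def)
  also have "card \<dots> = (\<Sum>c\<in>{1..m}. card {\<phi> \<in> weak_colourings V E m. \<phi> v = c})"
    using finite_weak_colourings[OF fin] by (intro card_UN_disjoint) auto
  also have "\<dots> = (\<Sum>c\<in>{1..m}. card {\<phi> \<in> weak_colourings V E m. \<phi> v = m})"
    by (intro sum.cong refl card_weak_colourings_fixed_colour[OF sub v])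
  finally show ?thesis by simp
qed

lemma one_less_card_imageI:
  assumes "finite (f ` A)" and "x \<in> A" and "y \<in> A" and "f x \<noteq> f y"
  shows "1 < card (f ` A)"
  using assms card_le_Suc0_iff_eq[of "f ` A"] by (metis imageI not_less One_nat_def)

lemma top_colour_class_indep:
  assumes "\<phi> \<in> weak_colourings V E (Suc n)"
  shows "{x \<in> V. \<phi> x = Suc n} \<in> indep_sets V E"
proof -
  have "\<not> e \<subseteq> {x \<in> V. \<phi> x = Suc n}" if "e \<in> E" for e
  proof
    assume "e \<subseteq> {x \<in> V. \<phi> x = Suc n}"
    then have "card (\<phi> ` e) \<le> card {Suc n}"
      by (intro card_mono) auto
    then show False
      using assms that by (auto simp: weak_colourings_def)
  qed
  then show ?thesis
    by (auto simp: indep_sets_def induced_edges_def)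
qed

lemma extend_by_top_colour:
  assumes sub: "\<forall>e\<in>E. e \<subseteq> V" and S: "S \<in> indep_sets V E"
    and \<psi>: "\<psi> \<in> weak_colourings (V - S) (induced_edges E (V - S)) n"
  shows "restrict (\<lambda>x. if x \<in> S then Suc n else \<psi> x) V \<in> weak_colourings V E (Suc n)"
    (is "?\<phi> \<in> _")
proof -
  have \<psi>_range: "\<psi> x \<in> {1..n}" if "x \<in> V - S" for x
    using \<psi> that by (auto simp: weak_colourings_def)
  have "(if x \<in> S then Suc n else \<psi> x) \<in> {1..Suc n}" if "x \<in> V" for x
    using \<psi>_range[of x] that by auto
  then have range: "?\<phi> \<in> V \<rightarrow>\<^sub>E {1..Suc n}"
    by (simp add: restrict_PiE_iff)
  have "1 < card (?\<phi> ` e)" if e: "e \<in> E" for e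
  proof (cases "e \<subseteq> V - S")
    case True
    then have "?\<phi> ` e = \<psi> ` e" by auto
    then show ?thesis
      using \<psi> e True by (auto simp: weak_colourings_def induced_edges_def)
  next
    case False
    then obtain y where y: "y \<in> e" "y \<in> S" using sub e by auto
    obtain z where z: "z \<in> e" "z \<notin> S"
      using S e by (auto simp: indep_sets_def induced_edges_def)
    have "?\<phi> ` e \<subseteq> {1..Suc n}" using PiE_mem[OF range] sub e by blast
    moreover have "?\<phi> y \<noteq> ?\<phi> z"
      using y z sub e \<psi>_range[of z] by auto
    ultimately show ?thesis
      using y z by (intro one_less_card_imageI) (auto intro: finite_subset)
  qed
  then show ?thesis
    using range by (simp add: weak_colourings_def)
qed

lemma card_weak_colourings_top_colour:
  assumes fin: "finite V" and sub: "\<forall>e\<in>E. e \<subseteq> V" and v: "v \<in> V"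
  shows "card {\<phi> \<in> weak_colourings V E (Suc n). \<phi> v = Suc n} =
    (\<Sum>S\<in>{S \<in> indep_sets V E. v \<in> S}. card (weak_colourings (V - S) (induced_edges E (V - S)) n))"
proof -
  let ?A = "SIGMA S:{S \<in> indep_sets V E. v \<in> S}. weak_colourings (V - S) (induced_edges E (V - S)) n"
  let ?B = "{\<phi> \<in> weak_colourings V E (Suc n). \<phi> v = Suc n}"
  define extend where "extend = (\<lambda>(S, \<psi>). restrict (\<lambda>x. if x \<in> S then Suc n else \<psi> x) V)"
  define split where "split \<phi> = (let S = {x \<in> V. \<phi> x = Suc n} in (S, restrict \<phi> (V - S)))" for \<phi>
  have "bij_betw extend ?A ?B"
  proof (rule bij_betw_byWitness[where f' = split])
    show "\<forall>a\<in>?A. split (extend a) = a"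
    proof (clarify)
      fix S \<psi> assume "S \<in> indep_sets V E" "\<psi> \<in> weak_colourings (V - S) (induced_edges E (V - S)) n"
      then have "S \<subseteq> V" and \<psi>: "\<psi> \<in> (V - S) \<rightarrow>\<^sub>E {1..n}"
        by (auto simp: indep_sets_def weak_colourings_def)
      have "\<psi> x \<noteq> Suc n" if "x \<in> V - S" for x
        using PiE_mem[OF \<psi> that] by auto
      with \<open>S \<subseteq> V\<close> have "{x \<in> V. extend (S, \<psi>) x = Suc n} = S"
        by (auto simp: extend_def)
      then show "split (extend (S, \<psi>)) = (S, \<psi>)"
        using \<psi> by (auto simp: split_def extend_def fun_eq_iff PiE_iff extensional_def)
    qed
    show "\<forall>\<phi>\<in>?B. extend (split \<phi>) = \<phi>"
    proof
      fix \<phi> assume "\<phi> \<in> ?B"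
      then have \<phi>: "\<phi> \<in> V \<rightarrow>\<^sub>E {1..Suc n}" by (simp add: weak_colourings_def)
      show "extend (split \<phi>) = \<phi>"
      proof
        fix x show "extend (split \<phi>) x = \<phi> x"
          using PiE_arb[OF \<phi>, of x] by (simp add: split_def extend_def Let_def)
      qed
    qed
    show "extend ` ?A \<subseteq> ?B"
    proof (rule image_subsetI)
      fix a assume "a \<in> ?A"
      then obtain S \<psi> where "a = (S, \<psi>)" "S \<in> indep_sets V E" "v \<in> S"
        "\<psi> \<in> weak_colourings (V - S) (induced_edges E (V - S)) n" by blast
      then show "extend a \<in> ?B"
        using v extend_by_top_colour[OF sub] by (simp add: extend_def)
    qed
    show "split ` ?B \<subseteq> ?A"
    proof (rule image_subsetI)
      fix \<phi> assume "\<phi> \<in> ?B"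
      then have \<phi>: "\<phi> \<in> weak_colourings V E (Suc n)" "\<phi> v = Suc n" by simp_all
      have "\<phi> ` (V - {x \<in> V. \<phi> x = Suc n}) \<subseteq> {1..n}"
      proof
        fix c assume "c \<in> \<phi> ` (V - {x \<in> V. \<phi> x = Suc n})"
        moreover have "\<phi> ` V \<subseteq> {1..Suc n}" using \<phi> by (auto simp: weak_colourings_def)
        ultimately show "c \<in> {1..n}" by auto
      qed
      then have "restrict \<phi> (V - {x \<in> V. \<phi> x = Suc n}) \<in>
          weak_colourings (V - {x \<in> V. \<phi> x = Suc n}) (induced_edges E (V - {x \<in> V. \<phi> x = Suc n})) n"
        by (intro restrict_weak_colouring[OF \<phi>(1)]) auto
      then show "split \<phi> \<in> ?A"
        using \<phi> v top_colour_class_indep[OF \<phi>(1)] by (simp add: split_def Let_def)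
    qed
  qed
  then have "card ?B = card ?A"
    by (simp add: bij_betw_same_card)
  also have "\<dots> = (\<Sum>S\<in>{S \<in> indep_sets V E. v \<in> S}. card (weak_colourings (V - S) (induced_edges E (V - S)) n))"
    using finite_indep_sets[OF fin] by (intro card_SigmaI) (auto simp: finite_weak_colourings fin)
  finally show ?thesis .
qed

lemma card_weak_colourings_Suc:
  assumes "finite V" and "\<forall>e\<in>E. e \<subseteq> V" and "v \<in> V"
  shows "card (weak_colourings V E (Suc n)) =
    Suc n * (\<Sum>S\<in>{S \<in> indep_sets V E. v \<in> S}. card (weak_colourings (V - S) (induced_edges E (V - S)) n))"
  using card_weak_colourings_eq_mult[OF assms] card_weak_colourings_top_colour[OF assms] by simp

lemma chromatic_polynomial_exists:
  assumes "finite V" and "\<forall>e\<in>E. e \<subseteq> V"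
  shows "\<exists>p::int poly. \<forall>n. poly p (int n) = int (card (weak_colourings V E n))"
  using assms
proof (induction "card V" arbitrary: V E rule: less_induct)
  case less
  show ?case
  proof (cases "V = {}")
    case True
    have "poly [:int (card (weak_colourings V E 0)):] (int n) = int (card (weak_colourings V E n))" for n
      using True weak_colourings_empty_vertices[of E n] by simp
    then show ?thesis by blast
  next
    case False
    then obtain v where v: "v \<in> V" by auto
    define SS where "SS = {S \<in> indep_sets V E. v \<in> S}"
    have "\<exists>q::int poly. \<forall>n. poly q (int n) = int (card (weak_colourings (V - S) (induced_edges E (V - S)) n))"
      if "S \<in> SS" for S
    proof (rule less.hyps)
      show "card (V - S) < card V"
        using that v less.prems(1) by (intro psubset_card_mono) (auto simp: SS_def)
    qed (use less.prems in \<open>auto simp: induced_edges_def\<close>)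
    then obtain q where q: "\<And>S n. S \<in> SS \<Longrightarrow>
        poly (q S) (int n) = int (card (weak_colourings (V - S) (induced_edges E (V - S)) n))"
      by metis
    let ?p = "[:0, 1:] * (\<Sum>S\<in>SS. pcompose (q S) [:-1, 1:])"
    have "poly ?p (int n) = int (card (weak_colourings V E n))" for n
    proof (cases n)
      case 0
      then show ?thesis using weak_colourings_0[OF False] by simp
    next
      case (Suc m)
      have "int (card (weak_colourings V E n)) = int (Suc m) *
          (\<Sum>S\<in>SS. int (card (weak_colourings (V - S) (induced_edges E (V - S)) m)))"
        using card_weak_colourings_Suc[OF less.prems v, of m] unfolding Suc SS_def
        by (simp only: of_nat_mult of_nat_sum)
      then show ?thesis
        by (simp add: Suc q poly_sum poly_pcompose)
    qed
    then show ?thesis by blast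
  qed
qed

lemma poly_chrom_poly:
  assumes "finite V" and "\<forall>e\<in>E. e \<subseteq> V"
  shows "poly (chrom_poly V E) (int n) = int (card (weak_colourings V E n))"
proof -
  obtain p where p: "\<And>n. poly p (int n) = int (card (weak_colourings V E n))"
    using chromatic_polynomial_exists[OF assms] by blast
  have "chrom_poly V E = p"
    unfolding chrom_poly_def
  proof (rule the_equality)
    fix q :: "int poly"
    assume q: "\<forall>n\<ge>1. poly q (int n) = int (card (weak_colourings V E n))"
    then show "q = p"
      by (intro poly_eqI_nat) (simp add: p)
  qed (simp add: p)
  then show ?thesis by (simp add: p)
qed

lemma poly_chrom_poly_induced:
  assumes "finite U"
  shows "poly (chrom_poly U (induced_edges E U)) (int n) = int (card (weak_colourings U (induced_edges E U) n))"
  using assms by (intro poly_chrom_poly) (auto simp: induced_edges_def)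

lemma pcompose_chrom_poly_plus_one:
  assumes fin: "finite V" and sub: "\<forall>e\<in>E. e \<subseteq> V" and v: "v \<in> V"
  shows "pcompose (chrom_poly V E) [:1, 1:] =
    [:1, 1:] * (\<Sum>S\<in>{S \<in> indep_sets V E. v \<in> S}. chrom_poly (V - S) (induced_edges E (V - S)))"
    (is "_ = _ * ?A")
proof (rule poly_eqI_nat)
  fix n :: nat
  have "poly (pcompose (chrom_poly V E) [:1, 1:]) (of_nat n) = poly (chrom_poly V E) (int (Suc n))"
    by (simp add: poly_pcompose add.commute)
  also have "\<dots> = int (card (weak_colourings V E (Suc n)))"
    by (rule poly_chrom_poly[OF fin sub])
  also have "\<dots> = int (Suc n) * (\<Sum>S\<in>{S \<in> indep_sets V E. v \<in> S}.
      int (card (weak_colourings (V - S) (induced_edges E (V - S)) n)))"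
    unfolding card_weak_colourings_Suc[OF assms] by (simp only: of_nat_mult of_nat_sum)
  also have "\<dots> = poly ([:1, 1:] * ?A) (of_nat n)"
    using fin by (simp add: poly_sum poly_chrom_poly_induced algebra_simps)
  finally show "poly (pcompose (chrom_poly V E) [:1, 1:]) (of_nat n) = poly ([:1, 1:] * ?A) (of_nat n)" .
qed

lemma x_dvd_chrom_poly:
  assumes "finite V" and "\<forall>e\<in>E. e \<subseteq> V" and "V \<noteq> {}"
  shows "[:0, 1:] dvd chrom_poly V E"
proof -
  have "poly (chrom_poly V E) 0 = 0"
    using poly_chrom_poly[OF assms(1,2), of 0] weak_colourings_0[OF assms(3)] by simp
  then show ?thesis
    using poly_eq_0_iff_dvd[of "chrom_poly V E" 0] by simp
qed

lemma merge_weak_colourings: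
  assumes disj: "U1 \<inter> U2 = {}" and split: "\<forall>e\<in>E. e \<subseteq> U1 \<or> e \<subseteq> U2"
    and a: "a \<in> weak_colourings U1 (induced_edges E U1) n"
    and b: "b \<in> weak_colourings U2 (induced_edges E U2) n"
  shows "restrict (\<lambda>x. if x \<in> U1 then a x else b x) (U1 \<union> U2) \<in> weak_colourings (U1 \<union> U2) E n"
    (is "?\<phi> \<in> _")
proof -
  have "?\<phi> \<in> (U1 \<union> U2) \<rightarrow>\<^sub>E {1..n}"
    using a b by (auto simp: weak_colourings_def restrict_PiE_iff PiE_iff)
  moreover have "1 < card (?\<phi> ` e)" if e: "e \<in> E" for e
  proof (cases "e \<subseteq> U1")
    case True
    then have "?\<phi> ` e = a ` e" by auto
    then show ?thesis using a e True by (auto simp: weak_colourings_def induced_edges_def)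
  next
    case False
    then have "e \<subseteq> U2" using split e by blast
    then have "?\<phi> ` e = b ` e" using disj by (intro image_cong) auto
    then show ?thesis using b e \<open>e \<subseteq> U2\<close> by (auto simp: weak_colourings_def induced_edges_def)
  qed
  ultimately show ?thesis by (simp add: weak_colourings_def)
qed

lemma card_weak_colourings_disjoint_Un:
  assumes disj: "U1 \<inter> U2 = {}" and split: "\<forall>e\<in>E. e \<subseteq> U1 \<or> e \<subseteq> U2"
  shows "card (weak_colourings (U1 \<union> U2) E n) =
    card (weak_colourings U1 (induced_edges E U1) n) * card (weak_colourings U2 (induced_edges E U2) n)"
proof -
  let ?A = "weak_colourings (U1 \<union> U2) E n"
  let ?B = "weak_colourings U1 (induced_edges E U1) n \<times> weak_colourings U2 (induced_edges E U2) n"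
  define restr where "restr \<phi> = (restrict \<phi> U1, restrict \<phi> U2)" for \<phi> :: "'a \<Rightarrow> nat"
  define merge :: "('a \<Rightarrow> nat) \<times> ('a \<Rightarrow> nat) \<Rightarrow> 'a \<Rightarrow> nat"
    where "merge = (\<lambda>(a, b). restrict (\<lambda>x. if x \<in> U1 then a x else b x) (U1 \<union> U2))"
  have "bij_betw restr ?A ?B"
  proof (rule bij_betw_byWitness[where f' = merge])
    show "\<forall>\<phi>\<in>?A. merge (restr \<phi>) = \<phi>"
      by (auto simp: merge_def restr_def weak_colourings_def PiE_iff extensional_def fun_eq_iff)
    show "\<forall>ab\<in>?B. restr (merge ab) = ab"
      using disj by (auto simp: merge_def restr_def weak_colourings_def PiE_iff extensional_def fun_eq_iff)
    show "restr ` ?A \<subseteq> ?B"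
    proof (rule image_subsetI)
      fix \<phi> assume \<phi>: "\<phi> \<in> ?A"
      then have "\<phi> ` (U1 \<union> U2) \<subseteq> {1..n}" by (auto simp: weak_colourings_def)
      then show "restr \<phi> \<in> ?B"
        unfolding restr_def using \<phi> by (auto intro!: restrict_weak_colouring)
    qed
    show "merge ` ?B \<subseteq> ?A"
      using merge_weak_colourings[OF disj split] by (auto simp: merge_def)
  qed
  then show ?thesis
    by (simp add: bij_betw_same_card card_cartesian_product)
qed

lemma chrom_poly_disjoint_Un:
  assumes fin: "finite U1" "finite U2" and disj: "U1 \<inter> U2 = {}"
    and sub: "\<forall>e\<in>E. e \<subseteq> U1 \<or> e \<subseteq> U2"
  shows "chrom_poly (U1 \<union> U2) E = chrom_poly U1 (induced_edges E U1) * chrom_poly U2 (induced_edges E U2)"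
proof (rule poly_eqI_nat)
  have "\<forall>e\<in>E. e \<subseteq> U1 \<union> U2" using sub by blast
  then show "poly (chrom_poly (U1 \<union> U2) E) (of_nat n) =
      poly (chrom_poly U1 (induced_edges E U1) * chrom_poly U2 (induced_edges E U2)) (of_nat n)" for n
    using fin by (simp add: poly_chrom_poly poly_chrom_poly_induced card_weak_colourings_disjoint_Un[OF disj sub])
qed

lemma x_squared_dvd_chrom_poly_disjoint_Un:
  assumes "finite U1" "finite U2" "U1 \<noteq> {}" "U2 \<noteq> {}" and "U1 \<inter> U2 = {}"
    and "\<forall>e\<in>E. e \<subseteq> U1 \<or> e \<subseteq> U2"
  shows "[:0, 1:] ^ 2 dvd chrom_poly (U1 \<union> U2) E"
proof -
  have "[:0, 1:] dvd chrom_poly U1 (induced_edges E U1)" "[:0, 1:] dvd chrom_poly U2 (induced_edges E U2)"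
    using assms by (auto intro!: x_dvd_chrom_poly simp: induced_edges_def)
  then show ?thesis
    unfolding chrom_poly_disjoint_Un[OF assms(1,2,5,6)] power2_eq_square by (rule mult_dvd_mono)
qed

lemma x_squared_dvd_chrom_poly_remove_cut:
  assumes fin: "finite V" and cover: "V1 \<union> V2 = V" and cut: "V1 \<inter> V2 = {w}"
    and edges: "\<forall>e\<in>E. w \<in> e \<or> e \<subseteq> V1 \<or> e \<subseteq> V2"
    and S: "w \<in> S" "\<not> V1 \<subseteq> S" "\<not> V2 \<subseteq> S"
  shows "[:0, 1:] ^ 2 dvd chrom_poly (V - S) (induced_edges E (V - S))"
proof -
  have parts: "V - S = (V1 - S) \<union> (V2 - S)"
    using cover by auto
  have "\<forall>e\<in>induced_edges E (V - S). e \<subseteq> V1 - S \<or> e \<subseteq> V2 - S"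
    using edges S(1) by (auto simp: induced_edges_def)
  then show ?thesis
    unfolding parts using fin cover cut S
    by (intro x_squared_dvd_chrom_poly_disjoint_Un) auto
qed

theorem proposition9:
  fixes V :: "'a set" and E :: "'a set set" and w :: 'a and V1 V2 :: "'a set"
  assumes "hypergraph V E"
    and "hg_connected V E"
    and "w \<in> V"
    and "V1 \<subset> V" and "V2 \<subset> V"
    and "V1 \<union> V2 = V" and "V1 \<inter> V2 = {w}"
    and "\<forall>e\<in>E. w \<in> e \<or> e \<subseteq> V1 \<or> e \<subseteq> V2"
  shows "[:-1, 1:] ^ 2 dvd chrom_poly V E \<longleftrightarrow>
         [:0, 1:] ^ 2 dvd (\<Sum>V0 \<in> {V0 \<in> indep_sets V E. V1 \<subseteq> V0 \<or> V2 \<subseteq> V0}.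
                              chrom_poly (V - V0) (induced_edges E (V - V0)))"
proof -
  from assms(1) have fin: "finite V" and sub: "\<forall>e\<in>E. e \<subseteq> V"
    by (auto simp: hypergraph_def)
  define Q where "Q S = chrom_poly (V - S) (induced_edges E (V - S))" for S
  define A where "A = {S \<in> indep_sets V E. w \<in> S}"
  define T where "T = {V0 \<in> indep_sets V E. V1 \<subseteq> V0 \<or> V2 \<subseteq> V0}"
  have "T \<subseteq> A" "finite A"
    using assms(7) finite_indep_sets[OF fin] by (auto simp: T_def A_def)
  then have sum_A: "(\<Sum>S\<in>A. Q S) = (\<Sum>S\<in>A - T. Q S) + (\<Sum>S\<in>T. Q S)"
    by (rule sum.subset_diff)
  have "[:0, 1:] ^ 2 dvd (\<Sum>S\<in>A - T. Q S)"
    unfolding Q_def using fin assms(6-8)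
    by (intro dvd_sum x_squared_dvd_chrom_poly_remove_cut) (auto simp: A_def T_def)
  then have rest: "[:0, 1:] ^ 2 dvd (\<Sum>S\<in>A. Q S) \<longleftrightarrow> [:0, 1:] ^ 2 dvd (\<Sum>S\<in>T. Q S)"
    unfolding sum_A by (rule dvd_add_right_iff)
  have "[:-1, 1:] ^ 2 dvd chrom_poly V E \<longleftrightarrow> [:0, 1:] ^ 2 dvd [:1, 1:] * (\<Sum>S\<in>A. Q S)"
    unfolding power_dvd_iff_pcompose_shift pcompose_chrom_poly_plus_one[OF fin sub assms(3)] A_def Q_def ..
  also have "\<dots> \<longleftrightarrow> [:0, 1:] ^ 2 dvd (\<Sum>S\<in>A. Q S)"
    by (rule x_power_dvd_mult_iff) simp
  also have "\<dots> \<longleftrightarrow> [:0, 1:] ^ 2 dvd (\<Sum>S\<in>T. Q S)"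
    by (rule rest)
  finally show ?thesis
    unfolding T_def Q_def .
qed

end
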